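(* Let $X$ be a Banach space, $\Omega\in L(X)$ an isomorphism of $X$ onto itself, $\tau>0$ and $f\in C^{0}([0,\infty),X)$. Then the unique classical solution of $$\ddot x(t)-\Omega^{2}x(t-2\tau)=f(t)\ (t\ge0),\qquad x(t)=0\ (t\in[-2\tau,0])$$ is given by $x(t)=\int_{0}^{t}x_2(t-s;\Omega)f(s)\,ds$ for $t\ge0$ (and $x(t)=0$ for $t\in[-2\tau,0]$).
   Context: For $A\in L(X)$, $\exp_\tau(t;A)=0$ for $t<-\tau$, $=\mathrm{id}_X$ for $-\tau\le t<0$, and $=\sum_{j=0}^{k}A^{j}\frac{(t-(j-1)\tau)^{j}}{j!}$ for $(k-1)\tau\le t<k\tau$, $k\in\mathbb N$. For $t\in\mathbb R$, $x_2(t;\Omega):=\tfrac12\Omega^{-1}(\exp_\tau(t;\Omega)-\exp_\tau(t;-\Omega))$; in particular $x_2(t;\Omega)=0$ for $t<0$. A classical solution is a function $x\in C^{1}([-2\tau,\infty),X)\cap C^{2}([-2\tau,0],X)\cap C^{2}([0,\infty),X)$ (one-sided derivatives at endpoints) satisfying the equations pointwise. *)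

theory Defs
  imports "HOL-Analysis.Analysis"
begin

definition Lpow :: "('a::real_normed_vector \<Rightarrow>\<^sub>L 'a) \<Rightarrow> nat \<Rightarrow> ('a \<Rightarrow>\<^sub>L 'a)" where
  "Lpow A j = ((\<lambda>B. A o\<^sub>L B) ^^ j) id_blinfun"

definition L_iso :: "('a::real_normed_vector \<Rightarrow>\<^sub>L 'a) \<Rightarrow> bool" where
  "L_iso A \<longleftrightarrow> (\<exists>B. B o\<^sub>L A = id_blinfun \<and> A o\<^sub>L B = id_blinfun)"

definition L_inv :: "('a::real_normed_vector \<Rightarrow>\<^sub>L 'a) \<Rightarrow> ('a \<Rightarrow>\<^sub>L 'a)" where
  "L_inv A = (SOME B. B o\<^sub>L A = id_blinfun \<and> A o\<^sub>L B = id_blinfun)"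

text \<open>Delayed exponential exp_tau(t;A).  For (k-1)tau \<le> t < k tau with k \<in> \<nat>,
  k = floor(t/tau) + 1.\<close>
definition delayed_exp :: "real \<Rightarrow> real \<Rightarrow> ('a::real_normed_vector \<Rightarrow>\<^sub>L 'a) \<Rightarrow> ('a \<Rightarrow>\<^sub>L 'a)" where
  "delayed_exp \<tau> t A =
     (if t < - \<tau> then 0
      else if t < 0 then id_blinfun
      else (\<Sum>j\<in>{0..nat (\<lfloor>t / \<tau>\<rfloor> + 1)}.
              ((t - (real j - 1) * \<tau>) ^ j / fact j) *\<^sub>R Lpow A j))"

definition x2 :: "real \<Rightarrow> real \<Rightarrow> ('a::real_normed_vector \<Rightarrow>\<^sub>L 'a) \<Rightarrow> ('a \<Rightarrow>\<^sub>L 'a)" where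
  "x2 \<tau> t \<Omega> = (1/2) *\<^sub>R (L_inv \<Omega> o\<^sub>L (delayed_exp \<tau> t \<Omega> - delayed_exp \<tau> t (- \<Omega>)))"

text \<open>Classical solution of x''(t) - Omega^2 x(t - 2 tau) = f(t) (t \<ge> 0),
  x(t) = 0 on [-2tau, 0]:  x \<in> C^1([-2tau,\<infinity>)) \<inter> C^2([-2tau,0]) \<inter> C^2([0,\<infinity>)),
  with one-sided derivatives at endpoints.\<close>
definition classical_solution ::
  "real \<Rightarrow> ('a::real_normed_vector \<Rightarrow>\<^sub>L 'a) \<Rightarrow> (real \<Rightarrow> 'a) \<Rightarrow> (real \<Rightarrow> 'a) \<Rightarrow> bool" where
  "classical_solution \<tau> \<Omega> f x \<longleftrightarrow>
     (\<exists>x' y'' z''.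
        (\<forall>t\<in>{-2*\<tau>..}. (x has_vector_derivative x' t) (at t within {-2*\<tau>..})) \<and>
        continuous_on {-2*\<tau>..} x' \<and>
        (\<forall>t\<in>{-2*\<tau>..0}. (x' has_vector_derivative y'' t) (at t within {-2*\<tau>..0})) \<and>
        continuous_on {-2*\<tau>..0} y'' \<and>
        (\<forall>t\<in>{0..}. (x' has_vector_derivative z'' t) (at t within {0..})) \<and>
        continuous_on {0..} z'' \<and>
        (\<forall>t\<in>{0..}. z'' t - Lpow \<Omega> 2 (x (t - 2*\<tau>)) = f t) \<and>
        (\<forall>t\<in>{-2*\<tau>..0}. x t = 0))"

end

theory Submission
  imports Defs
begin

(*
  For t \<ge> 0 the even powers in exp_tau(t;\<Omega>) - exp_tau(t;-\<Omega>) cancel and \<Omega>\<^sup>-\<^sup>1 lowers the odd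
  ones, so x2(t;\<Omega>) = \<Sum>\<^sub>m (t - 2m\<tau>)\<^sub>+\<^sup>2\<^sup>m\<^sup>+\<^sup>1/(2m+1)! \<Omega>\<^sup>2\<^sup>m, a locally finite sum of truncated powers.
  Continuing its leading term t linearly to t < 0 gives a C\<^sup>2 kernel K on \<real> with K(0) = 0,
  K'(0) = id and K''(t) = \<Omega>\<^sup>2 x2(t - 2\<tau>;\<Omega>). Differentiating the convolution x = K * f twice
  (Leibniz rule plus the fundamental theorem of calculus) gives x'' = f + \<Omega>\<^sup>2 x(\<cdot> - 2\<tau>).
  Uniqueness is the method of steps: the difference d of two solutions satisfies
  d'' = \<Omega>\<^sup>2 d(\<cdot> - 2\<tau>), so d vanishing on [-2\<tau>, 2n\<tau>] forces d'' and hence d to vanish on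
  [0, 2(n+1)\<tau>].
*)

lemma blinfun_compose_assoc: "(A o\<^sub>L B) o\<^sub>L C = A o\<^sub>L (B o\<^sub>L C)"
  by (rule blinfun_eqI) simp

lemma id_blinfun_compose [simp]: "id_blinfun o\<^sub>L A = A"
  by (rule blinfun_eqI) simp

lemma Lpow_0 [simp]: "Lpow A 0 = id_blinfun"
  by (simp add: Lpow_def)

lemma Lpow_Suc: "Lpow A (Suc j) = A o\<^sub>L Lpow A j"
  by (simp add: Lpow_def)

lemma Lpow_add: "Lpow A (i + j) = Lpow A i o\<^sub>L Lpow A j"
  by (induction i) (auto simp: Lpow_Suc blinfun_compose_assoc intro!: blinfun_eqI)

lemma Lpow_uminus: "Lpow (- A) j = ((-1) ^ j) *\<^sub>R Lpow A j"
  by (induction j) (auto simp: Lpow_Suc blinfun.bilinear_simps intro!: blinfun_eqI)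

lemma L_inv_comp: "L_iso A \<Longrightarrow> L_inv A o\<^sub>L A = id_blinfun"
  unfolding L_iso_def L_inv_def by (rule someI2_ex) auto

lemma L_inv_comp_Lpow_Suc: "L_iso A \<Longrightarrow> L_inv A o\<^sub>L Lpow A (Suc j) = Lpow A j"
  by (simp add: Lpow_Suc blinfun_compose_assoc[symmetric] L_inv_comp)

lemma sum_lessThan_double: "(\<Sum>j<2 * N. h j) = (\<Sum>m<N. h (2 * m) + h (2 * m + 1))"
  for h :: "nat \<Rightarrow> 'a::comm_monoid_add"
  by (induction N) (auto simp: add.assoc)

lemma sum_atLeast1_lessThan_Suc: "(\<Sum>m\<in>{1..<Suc n}. g m) = (\<Sum>m<n. g (Suc m))"
  unfolding One_nat_def sum.shift_bounds_Suc_ivl atLeast0LessThan ..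

lemma has_vector_derivative_within_Un:
  "(f has_vector_derivative f') (at x within S) \<Longrightarrow> (f has_vector_derivative f') (at x within T) \<Longrightarrow>
   (f has_vector_derivative f') (at x within S \<union> T)"
  by (auto simp: has_vector_derivative_def has_derivative_within Lim_within_Un)

lemma has_vector_derivative_zero_extension:
  fixes g g' :: "real \<Rightarrow> 'a::real_normed_vector"
  assumes zero: "\<And>s. s \<le> 0 \<Longrightarrow> g s = 0" "\<And>s. s \<le> 0 \<Longrightarrow> g' s = 0"
    and right: "\<And>s. 0 \<le> s \<Longrightarrow> (g has_vector_derivative g' s) (at s within {0..})"
  shows "(g has_vector_derivative g' t) (at t)"
proof -
  have left: "(g has_vector_derivative g' t) (at t within {..0})" if "t \<le> 0"
    by (rule has_vector_derivative_transform[where f="\<lambda>_. 0"]) (use that zero in auto)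
  consider "t < 0" | "t = 0" | "t > 0" by linarith
  then show ?thesis
  proof cases
    case 1
    then show ?thesis using left at_within_interior[of t "{..0}"] by simp
  next
    case 2
    have "{..0} \<union> {0..} = (UNIV :: real set)" by auto
    then show ?thesis using 2 has_vector_derivative_within_Un[OF left right] by simp
  next
    case 3
    then show ?thesis using right[of t] at_within_interior[of t "{0..}"] by simp
  qed
qed

lemma continuous_on_zero_extension:
  fixes g :: "real \<Rightarrow> 'a::real_normed_vector"
  assumes "\<And>s. s \<le> 0 \<Longrightarrow> g s = 0" and "continuous_on {0..} g"
  shows "continuous_on UNIV g"
proof -
  have "g (max s 0) = g s" for s
    using assms(1) by (auto simp: max_def)
  moreover have "continuous_on UNIV (\<lambda>s. g (max s 0))"
    by (rule continuous_on_compose2[OF assms(2)]) (auto intro!: continuous_intros)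
  ultimately show ?thesis by simp
qed

lemma vanishing_if_derivative_vanishes:
  fixes g :: "real \<Rightarrow> 'a::real_normed_vector"
  assumes "\<And>s. s \<in> {0..T} \<Longrightarrow> (g has_vector_derivative 0) (at s within {0..T})"
    and "g 0 = 0" and "t \<in> {0..T}"
  shows "g t = 0"
proof -
  obtain c where "\<And>s. s \<in> {0..T} \<Longrightarrow> g s = c"
    using has_vector_derivative_zero_constant[of "{0..T}" g] assms(1) by auto
  then show ?thesis using assms(2,3) by force
qed

definition trunc_power :: "nat \<Rightarrow> real \<Rightarrow> real" where
  "trunc_power n u = (if u \<le> 0 then 0 else u ^ n / fact n)"

lemma trunc_power_nonpos [simp]: "u \<le> 0 \<Longrightarrow> trunc_power n u = 0"
  by (simp add: trunc_power_def)

lemma has_real_derivative_trunc_power: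
  assumes "1 \<le> n"
  shows "(trunc_power (Suc n) has_real_derivative trunc_power n u) (at u)"
proof -
  have right: "(trunc_power (Suc n) has_vector_derivative trunc_power n s) (at s within {0..})"
    if "0 \<le> s" for s
  proof -
    have "real (Suc n) * s ^ n / fact (Suc n) = trunc_power n s"
      using that assms by (auto simp: trunc_power_def fact_Suc)
    then have "((\<lambda>u. u ^ Suc n / fact (Suc n)) has_real_derivative trunc_power n s) (at s within {0..})"
      using DERIV_cdivide[OF DERIV_pow[of "Suc n" s], of "fact (Suc n)"] by simp
    then show ?thesis
      unfolding has_real_derivative_iff_has_vector_derivative
      by (rule has_vector_derivative_transform[rotated 2]) (use that in \<open>auto simp: trunc_power_def\<close>)
  qed
  have "(trunc_power (Suc n) has_vector_derivative trunc_power n u) (at u)"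
    by (rule has_vector_derivative_zero_extension[OF _ _ right]) simp_all
  then show ?thesis
    unfolding has_real_derivative_iff_has_vector_derivative .
qed

lemma continuous_trunc_power:
  assumes "1 \<le> n"
  shows "continuous_on UNIV (trunc_power n)"
proof (rule continuous_on_zero_extension)
  have "continuous_on {0..} (\<lambda>u::real. u ^ n / fact n)"
    by (intro continuous_intros) simp
  then show "continuous_on {0..} (trunc_power n)"
    by (rule continuous_on_eq) (use assms in \<open>auto simp: trunc_power_def\<close>)
qed simp

lemma delayed_exp_eq_sum:
  fixes A :: "'a::real_normed_vector \<Rightarrow>\<^sub>L 'a"
  assumes tau: "\<tau> > 0" and t: "0 \<le> t" "t \<le> real M * \<tau>"
  shows "delayed_exp \<tau> t A = (\<Sum>j\<le>M. trunc_power j (t - (real j - 1) * \<tau>) *\<^sub>R Lpow A j)"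
proof -
  define k where "k = nat (\<lfloor>t / \<tau>\<rfloor> + 1)"
  define summand where "summand j = trunc_power j (t - (real j - 1) * \<tau>) *\<^sub>R Lpow A j" for j
  have k: "real k - 1 \<le> t / \<tau>" "t / \<tau> < real k"
    using t tau by (auto simp: k_def)
  have "delayed_exp \<tau> t A = (\<Sum>j\<in>{0..k}. summand j)"
  proof -
    have "(t - (real j - 1) * \<tau>) ^ j / fact j = trunc_power j (t - (real j - 1) * \<tau>)" if "j \<le> k" for j
    proof (cases "j = 0")
      case False
      have "real j - 1 \<le> t / \<tau>" using that k by linarith
      then have "(real j - 1) * \<tau> \<le> t" using tau by (simp add: pos_le_divide_eq)
      then show ?thesis using False by (auto simp: trunc_power_def)
    qed (use tau t in \<open>simp add: trunc_power_def\<close>)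
    then show ?thesis
      using t tau by (simp add: delayed_exp_def k_def[symmetric] summand_def)
  qed
  also have "\<dots> = (\<Sum>j\<le>max k M. summand j)"
  proof (rule sum.mono_neutral_left)
    show "\<forall>j\<in>{..max k M} - {0..k}. summand j = 0"
    proof
      fix j assume "j \<in> {..max k M} - {0..k}"
      then have "t / \<tau> < real j - 1" using k by auto
      then have "t < (real j - 1) * \<tau>" using tau by (simp add: pos_divide_less_eq)
      then show "summand j = 0" by (simp add: summand_def)
    qed
  qed auto
  also have "\<dots> = (\<Sum>j\<le>M. summand j)"
  proof (rule sum.mono_neutral_right)
    show "\<forall>j\<in>{..max k M} - {..M}. summand j = 0"
    proof
      fix j assume "j \<in> {..max k M} - {..M}"
      then have "real M \<le> real j - 1" by auto
      then have "t \<le> (real j - 1) * \<tau>" using t tau by (smt (verit) mult_right_mono)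
      then show "summand j = 0" by (simp add: summand_def)
    qed
  qed auto
  finally show ?thesis by (simp add: summand_def)
qed

lemma x2_eq_sum:
  fixes W :: "'a::real_normed_vector \<Rightarrow>\<^sub>L 'a"
  assumes W: "L_iso W" and tau: "\<tau> > 0" and t: "0 \<le> t" "t \<le> 2 * real N * \<tau>"
  shows "x2 \<tau> t W = (\<Sum>m<N. trunc_power (2*m+1) (t - 2 * real m * \<tau>) *\<^sub>R Lpow W (2*m))"
proof -
  define c where "c j = trunc_power j (t - (real j - 1) * \<tau>)" for j :: nat
  have "delayed_exp \<tau> t A = (\<Sum>j<Suc (2*N). c j *\<^sub>R Lpow A j)" for A :: "'a \<Rightarrow>\<^sub>L 'a"
    using delayed_exp_eq_sum[OF tau t(1), of "2 * N"] t(2) unfolding c_def lessThan_Suc_atMost by simp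
  then have "delayed_exp \<tau> t W - delayed_exp \<tau> t (- W) = (\<Sum>j<Suc (2*N). (c j * (1 - (-1) ^ j)) *\<^sub>R Lpow W j)"
    by (simp add: Lpow_uminus sum_subtractf[symmetric] algebra_simps)
  also have "\<dots> = (\<Sum>m<N. (2 * c (2*m+1)) *\<^sub>R Lpow W (Suc (2*m)))"
    by (simp add: sum_lessThan_double) (simp add: mult.commute)
  finally have "x2 \<tau> t W = (\<Sum>m<N. c (2*m+1) *\<^sub>R (L_inv W o\<^sub>L Lpow W (Suc (2*m))))"
    by (simp add: x2_def bounded_bilinear.sum_right[OF bounded_bilinear_blinfun_compose]
        bounded_bilinear.scaleR_right[OF bounded_bilinear_blinfun_compose] scaleR_sum_right)
  then show ?thesis
    by (simp add: L_inv_comp_Lpow_Suc[OF W] c_def)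
qed

lemma x2_neg: "t < 0 \<Longrightarrow> x2 \<tau> t W = 0"
  by (simp add: x2_def delayed_exp_def)

(* The m-th summand is the i-th derivative of the m-th summand in x2_eq_sum (for i \<le> 2). *)
definition kernel_tail :: "real \<Rightarrow> ('a::real_normed_vector \<Rightarrow>\<^sub>L 'a) \<Rightarrow> nat \<Rightarrow> nat \<Rightarrow> real \<Rightarrow> ('a \<Rightarrow>\<^sub>L 'a)" where
  "kernel_tail \<tau> W i N t =
     (\<Sum>m\<in>{1..<N}. trunc_power (2*m+1-i) (t - 2 * real m * \<tau>) *\<^sub>R Lpow W (2*m))"

(* kernel_tail with N summands is exact on (-\<infinity>, 2N\<tau>]; tail_length leaves a margin of \<tau>,
   so near any point the kernel below is one fixed finite sum. *)
definition tail_length :: "real \<Rightarrow> real \<Rightarrow> nat" where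
  "tail_length \<tau> t = Suc (nat \<lceil>t / \<tau>\<rceil>)"

lemma tail_length_bound:
  assumes "\<tau> > 0"
  shows "t + 2 * \<tau> \<le> 2 * real (tail_length \<tau> t) * \<tau>"
proof -
  have "t / \<tau> \<le> real (nat \<lceil>t / \<tau>\<rceil>)" by linarith
  then have "t \<le> real (nat \<lceil>t / \<tau>\<rceil>) * \<tau>" using assms by (simp add: pos_divide_le_eq)
  moreover have "0 \<le> real (nat \<lceil>t / \<tau>\<rceil>) * \<tau>" using assms by simp
  ultimately show ?thesis by (simp add: tail_length_def algebra_simps)
qed

lemma kernel_tail_stable:
  assumes "\<tau> > 0" "N \<le> N'" "t \<le> 2 * real N * \<tau>"
  shows "kernel_tail \<tau> W i N' t = kernel_tail \<tau> W i N t"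
  unfolding kernel_tail_def
proof (rule sum.mono_neutral_right)
  show "\<forall>m\<in>{1..<N'} - {1..<N}. trunc_power (2*m+1-i) (t - 2 * real m * \<tau>) *\<^sub>R Lpow W (2*m) = 0"
  proof
    fix m assume "m \<in> {1..<N'} - {1..<N}"
    then have "2 * real N * \<tau> \<le> 2 * real m * \<tau>" using assms(1) by auto
    then show "trunc_power (2*m+1-i) (t - 2 * real m * \<tau>) *\<^sub>R Lpow W (2*m) = 0"
      using assms(3) by simp
  qed
qed (use assms(2) in auto)

lemma kernel_tail_local:
  assumes "\<tau> > 0" "dist t' t < \<tau>"
  shows "kernel_tail \<tau> W i (tail_length \<tau> t') t' = kernel_tail \<tau> W i (tail_length \<tau> t) t'"
proof -
  let ?M = "max (tail_length \<tau> t) (tail_length \<tau> t')"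
  have "t' \<le> 2 * real (tail_length \<tau> t) * \<tau>" "t' \<le> 2 * real (tail_length \<tau> t') * \<tau>"
    using tail_length_bound[OF assms(1), of t] tail_length_bound[OF assms(1), of t'] assms
    by (auto simp: dist_real_def)
  then have "kernel_tail \<tau> W i ?M t' = kernel_tail \<tau> W i (tail_length \<tau> t) t'"
    "kernel_tail \<tau> W i ?M t' = kernel_tail \<tau> W i (tail_length \<tau> t') t'"
    by (auto intro: kernel_tail_stable[OF assms(1)])
  then show ?thesis by simp
qed

lemma has_vector_derivative_kernel_tail:
  assumes "i \<le> 1"
  shows "(kernel_tail \<tau> W i N has_vector_derivative kernel_tail \<tau> W (Suc i) N t) (at t)"
proof -
  have "((\<lambda>t. trunc_power (2*m+1-i) (t - 2 * real m * \<tau>) *\<^sub>R Lpow W (2*m)) has_vector_derivative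
      trunc_power (2*m+1 - Suc i) (t - 2 * real m * \<tau>) *\<^sub>R Lpow W (2*m)) (at t)"
    if "m \<in> {1..<N}" for m
  proof -
    have "2*m+1-i = Suc (2*m+1 - Suc i)" "1 \<le> 2*m+1 - Suc i" using that assms by auto
    then have "(trunc_power (2*m+1-i) has_real_derivative trunc_power (2*m+1 - Suc i) (t + - (2 * real m * \<tau>)))
        (at (t + - (2 * real m * \<tau>)))"
      by (simp only: has_real_derivative_trunc_power)
    then have "((\<lambda>t. trunc_power (2*m+1-i) (t - 2 * real m * \<tau>)) has_real_derivative
        trunc_power (2*m+1 - Suc i) (t - 2 * real m * \<tau>)) (at t)"
      unfolding DERIV_shift by simp
    from has_vector_derivative_scaleR[OF this has_vector_derivative_const]
    show ?thesis by simp
  qed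
  then show ?thesis
    unfolding kernel_tail_def by (rule has_vector_derivative_sum)
qed

lemma continuous_kernel_tail_2: "continuous_on UNIV (kernel_tail \<tau> W 2 N)"
proof -
  have "continuous_on UNIV (\<lambda>t. trunc_power (2*m+1-2) (t - 2 * real m * \<tau>) *\<^sub>R Lpow W (2*m))"
    if "m \<in> {1..<N}" for m
    using that
    by (intro continuous_intros continuous_on_compose2[OF continuous_trunc_power[of "2*m+1-2"]]) auto
  then show ?thesis
    unfolding kernel_tail_def[abs_def] by (rule continuous_on_sum)
qed

definition kernel_head :: "nat \<Rightarrow> real \<Rightarrow> ('a::real_normed_vector \<Rightarrow>\<^sub>L 'a)" where
  "kernel_head i t = (if i = 0 then t *\<^sub>R id_blinfun else if i = 1 then id_blinfun else 0)"

lemma has_vector_derivative_kernel_head: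
  "i \<le> 1 \<Longrightarrow> (kernel_head i has_vector_derivative kernel_head (Suc i) t) (at t)"
  by (cases i) (auto simp: kernel_head_def[abs_def] intro!: derivative_eq_intros)

(* delay_kernel \<tau> W 0 agrees with x2 on [0, \<infinity>) but continues the leading summand t\<^sub>+ as t,
   which makes it C\<^sup>2 on \<real>; delay_kernel \<tau> W i is its i-th derivative. *)
definition delay_kernel :: "real \<Rightarrow> ('a::real_normed_vector \<Rightarrow>\<^sub>L 'a) \<Rightarrow> nat \<Rightarrow> real \<Rightarrow> ('a \<Rightarrow>\<^sub>L 'a)" where
  "delay_kernel \<tau> W i t =
     kernel_head i t + kernel_tail \<tau> W i (tail_length \<tau> t) t"

lemma delay_kernel_local:
  assumes "\<tau> > 0" "dist t' t < \<tau>"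
  shows "delay_kernel \<tau> W i t' =
    kernel_head i t' + kernel_tail \<tau> W i (tail_length \<tau> t) t'"
  using kernel_tail_local[OF assms] by (simp add: delay_kernel_def)

lemma has_vector_derivative_delay_kernel:
  assumes "\<tau> > 0" "i \<le> 1"
  shows "(delay_kernel \<tau> W i has_vector_derivative delay_kernel \<tau> W (Suc i) t) (at t)"
proof -
  have "((\<lambda>s. kernel_head i s + kernel_tail \<tau> W i (tail_length \<tau> t) s) has_vector_derivative
      delay_kernel \<tau> W (Suc i) t) (at t)"
    unfolding delay_kernel_def
    by (rule has_vector_derivative_add[OF has_vector_derivative_kernel_head has_vector_derivative_kernel_tail])
      (use assms in auto)
  then show ?thesis
  proof (rule has_vector_derivative_transform_within_open[where S="ball t \<tau>"])
    show "kernel_head i s + kernel_tail \<tau> W i (tail_length \<tau> t) s = delay_kernel \<tau> W i s" if "s \<in> ball t \<tau>" for s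
      using delay_kernel_local[OF assms(1), of s t W i] that by (simp add: dist_commute)
  qed (use assms in auto)
qed

lemma continuous_delay_kernel:
  assumes "\<tau> > 0" "i \<le> 2"
  shows "continuous_on UNIV (delay_kernel \<tau> W i)"
proof (cases "i \<le> 1")
  case True
  then show ?thesis
    using has_vector_derivative_delay_kernel[OF assms(1) True] by (intro continuous_on_vector_derivative)
next
  case False
  have "isCont (delay_kernel \<tau> W 2) t" for t
  proof -
    have "isCont (kernel_tail \<tau> W 2 (tail_length \<tau> t)) t"
      using continuous_kernel_tail_2 continuous_on_eq_continuous_at open_UNIV by blast
    then show ?thesis
      by (rule continuous_transform_within[where s=UNIV and \<delta>=\<tau>, simplified])
        (use delay_kernel_local[OF assms(1), of _ t W 2] assms in \<open>auto simp: kernel_head_def\<close>)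
  qed
  moreover have "i = 2" using False assms(2) by simp
  ultimately show ?thesis by (simp add: continuous_on_eq_continuous_at)
qed

lemma delay_kernel_at_zero:
  assumes "\<tau> > 0"
  shows "delay_kernel \<tau> W 0 0 = 0" "delay_kernel \<tau> W 1 0 = id_blinfun"
  using assms by (simp_all add: delay_kernel_def kernel_head_def kernel_tail_def)

lemma x2_eq_delay_kernel:
  assumes W: "L_iso W" and tau: "\<tau> > 0" and t: "0 \<le> t"
  shows "x2 \<tau> t W = delay_kernel \<tau> W 0 t"
proof -
  obtain n where n: "tail_length \<tau> t = Suc n" by (simp add: tail_length_def)
  have "x2 \<tau> t W = (\<Sum>m<Suc n. trunc_power (2*m+1) (t - 2 * real m * \<tau>) *\<^sub>R Lpow W (2*m))"
    using x2_eq_sum[OF W tau t, of "Suc n"] tail_length_bound[OF tau, of t] tau n by simp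
  also have "\<dots> = trunc_power 1 t *\<^sub>R id_blinfun + kernel_tail \<tau> W 0 (Suc n) t"
    unfolding sum.lessThan_Suc_shift kernel_tail_def sum_atLeast1_lessThan_Suc by simp
  also have "trunc_power 1 t = t"
    using t by (simp add: trunc_power_def)
  finally show ?thesis
    unfolding delay_kernel_def kernel_head_def n by simp
qed

lemma delay_kernel_2_eq_x2:
  assumes W: "L_iso W" and tau: "\<tau> > 0"
  shows "delay_kernel \<tau> W 2 t = Lpow W 2 o\<^sub>L x2 \<tau> (t - 2 * \<tau>) W"
proof (cases "t < 2 * \<tau>")
  case True
  have vanish: "trunc_power k (t - 2 * real m * \<tau>) = 0" if "1 \<le> m" for k m
  proof -
    have "2 * \<tau> \<le> 2 * real m * \<tau>" using that tau by simp
    then show ?thesis using True by simp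
  qed
  have "kernel_tail \<tau> W 2 N t = 0" for N
    unfolding kernel_tail_def by (intro sum.neutral ballI) (simp add: vanish)
  then show ?thesis
    using True by (simp add: delay_kernel_def kernel_head_def x2_neg)
next
  case False
  obtain n where n: "tail_length \<tau> t = Suc n" by (simp add: tail_length_def)
  have "t - 2 * \<tau> \<le> 2 * real n * \<tau>"
    using tail_length_bound[OF tau, of t] tau n by (simp add: algebra_simps)
  then have "x2 \<tau> (t - 2 * \<tau>) W =
      (\<Sum>m<n. trunc_power (2*m+1) (t - 2 * \<tau> - 2 * real m * \<tau>) *\<^sub>R Lpow W (2*m))"
    using x2_eq_sum[OF W tau, of "t - 2 * \<tau>" n] False by simp
  also have "Lpow W 2 o\<^sub>L \<dots> = kernel_tail \<tau> W 2 (Suc n) t"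
    unfolding kernel_tail_def sum_atLeast1_lessThan_Suc
      bounded_bilinear.sum_right[OF bounded_bilinear_blinfun_compose]
  proof (rule sum.cong)
    fix m
    have "t - 2 * \<tau> - 2 * real m * \<tau> = t - 2 * real (Suc m) * \<tau>"
      by (simp add: algebra_simps)
    moreover have "Lpow W 2 o\<^sub>L Lpow W (2 * m) = Lpow W (2 * Suc m)"
      by (simp add: Lpow_add[symmetric])
    moreover have "2 * Suc m + 1 - 2 = 2 * m + 1" by simp
    ultimately show "Lpow W 2 o\<^sub>L trunc_power (2*m+1) (t - 2 * \<tau> - 2 * real m * \<tau>) *\<^sub>R Lpow W (2*m) =
        trunc_power (2 * Suc m + 1 - 2) (t - 2 * real (Suc m) * \<tau>) *\<^sub>R Lpow W (2 * Suc m)"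
      by (simp only: bounded_bilinear.scaleR_right[OF bounded_bilinear_blinfun_compose])
  qed simp
  finally show ?thesis
    unfolding delay_kernel_def kernel_head_def n by simp
qed

definition convolution :: "(real \<Rightarrow> 'a::real_normed_vector \<Rightarrow>\<^sub>L 'b::real_normed_vector) \<Rightarrow> (real \<Rightarrow> 'a) \<Rightarrow> real \<Rightarrow> 'b" where
  "convolution K f t = integral {0..t} (\<lambda>s. K (t - s) (f s))"

lemma convolution_nonpos: "t \<le> 0 \<Longrightarrow> convolution K f t = 0"
  by (cases "t = 0") (simp_all add: convolution_def)

lemma continuous_on_convolution_integrand:
  fixes K :: "real \<Rightarrow> 'a::real_normed_vector \<Rightarrow>\<^sub>L 'b::real_normed_vector"
  assumes "continuous_on UNIV K" "continuous_on S f"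
  shows "continuous_on S (\<lambda>s. K (t - s) (f s))"
proof -
  have "continuous_on S (\<lambda>s. K (t - s))"
    by (rule continuous_on_compose2[OF assms(1)]) (auto intro!: continuous_intros)
  then show ?thesis using assms(2) by (intro continuous_intros)
qed

lemma continuous_on_convolution_integrand2:
  fixes K :: "real \<Rightarrow> 'a::real_normed_vector \<Rightarrow>\<^sub>L 'b::real_normed_vector"
  assumes "continuous_on UNIV K" "continuous_on S f"
  shows "continuous_on (UNIV \<times> S) (\<lambda>(u, s). K (u - s) (f s))"
proof -
  have "continuous_on (UNIV \<times> S) (\<lambda>p. K (fst p - snd p))"
    by (rule continuous_on_compose2[OF assms(1)]) (auto intro!: continuous_intros)
  moreover have "continuous_on (UNIV \<times> S) (\<lambda>p. f (snd p))"
    by (rule continuous_on_compose2[OF assms(2)]) (auto intro!: continuous_intros)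
  ultimately show ?thesis
    unfolding case_prod_beta by (intro continuous_intros)
qed

lemma has_vector_derivative_integral_parameter:
  fixes K K' :: "real \<Rightarrow> 'a::real_normed_vector \<Rightarrow>\<^sub>L 'b::banach"
  assumes K: "\<And>u. (K has_vector_derivative K' u) (at u)"
    and K': "continuous_on UNIV K'" and f: "continuous_on {0..v} f"
  shows "((\<lambda>u. integral {0..v} (\<lambda>s. K (u - s) (f s))) has_vector_derivative
          integral {0..v} (\<lambda>s. K' (u - s) (f s))) (at u)"
proof -
  have "continuous_on UNIV K"
    using K by (intro continuous_on_vector_derivative)
  have "((\<lambda>u. integral (cbox 0 v) (\<lambda>s. K (u - s) (f s))) has_vector_derivative
      integral (cbox 0 v) (\<lambda>s. K' (u - s) (f s))) (at u within UNIV)"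
  proof (rule leibniz_rule_vector_derivative)
    show "((\<lambda>u. K (u - s) (f s)) has_vector_derivative K' (u - s) (f s)) (at u within UNIV)" for u s
    proof -
      have "((\<lambda>u. u - s) has_vector_derivative 1) (at u)"
        by (auto intro!: derivative_eq_intros)
      from vector_diff_chain_at[OF this K]
      have "((\<lambda>u. K (u - s)) has_vector_derivative K' (u - s)) (at u)"
        by (simp add: o_def)
      from bounded_linear.has_vector_derivative[OF blinfun.bounded_linear_left this]
      show ?thesis by simp
    qed
    show "(\<lambda>s. K (u - s) (f s)) integrable_on cbox 0 v" for u
      unfolding cbox_interval
      by (intro integrable_continuous_real continuous_on_convolution_integrand \<open>continuous_on UNIV K\<close> f)
    show "continuous_on (UNIV \<times> cbox 0 v) (\<lambda>(u, s). K' (u - s) (f s))"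
      unfolding cbox_interval by (rule continuous_on_convolution_integrand2[OF K' f])
  qed auto
  then show ?thesis by (simp add: cbox_interval)
qed

lemma has_vector_derivative_convolution:
  fixes K K' :: "real \<Rightarrow> 'a::real_normed_vector \<Rightarrow>\<^sub>L 'b::banach"
  assumes K: "\<And>u. (K has_vector_derivative K' u) (at u)"
    and K': "continuous_on UNIV K'" and f: "continuous_on {0..} f" and t: "0 \<le> t"
  shows "(convolution K f has_vector_derivative K 0 (f t) + convolution K' f t) (at t within {0..})"
proof -
  \<comment> \<open>The convolution is the diagonal of \<Phi>; differentiate \<Phi> by its two partial derivatives.\<close>
  define \<Phi> where "\<Phi> u v = integral {0..v} (\<lambda>s. K (u - s) (f s))" for u v
  define \<Phi>\<^sub>u where "\<Phi>\<^sub>u u v = integral {0..v} (\<lambda>s. K' (u - s) (f s))" for u v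
  have Kc: "continuous_on UNIV K"
    using K by (intro continuous_on_vector_derivative)
  have f_v: "continuous_on {0..v} f" if "0 \<le> v" for v
    by (rule continuous_on_subset[OF f]) auto
  have \<Phi>_u: "((\<lambda>u. \<Phi> u v) has_derivative (\<lambda>h. h *\<^sub>R \<Phi>\<^sub>u u v)) (at u)" if "0 \<le> v" for u v
    using has_vector_derivative_integral_parameter[OF K K' f_v[OF that]]
    by (simp add: \<Phi>_def \<Phi>\<^sub>u_def has_vector_derivative_def)
  have \<Phi>_v: "((\<lambda>v. \<Phi> u v) has_derivative blinfun_scaleR_left (K (u - v) (f v))) (at v within {0..})"
    if "0 \<le> v" for u v
  proof -
    have "((\<lambda>v. \<Phi> u v) has_vector_derivative K (u - v) (f v)) (at v within {0..v+1})"
      unfolding \<Phi>_def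
      by (rule integral_has_vector_derivative[OF continuous_on_convolution_integrand[OF Kc f_v]])
        (use that in auto)
    moreover have "at v within {0..v+1} = at v within {0..}"
      by (rule at_within_nhd[where S="{..<v+1}"]) auto
    ultimately show ?thesis by (simp add: has_vector_derivative_def)
  qed
  have \<Phi>_v_cont: "continuous_on (UNIV \<times> {0..}) (\<lambda>(u, v). blinfun_scaleR_left (K (u - v) (f v)))"
    using continuous_on_convolution_integrand2[OF Kc f]
    by (auto simp: split_beta intro!: continuous_intros)
  define \<Phi>' where "\<Phi>' p = (\<lambda>(h, k). h *\<^sub>R \<Phi>\<^sub>u (fst p) (snd p) + k *\<^sub>R K (fst p - snd p) (f (snd p)))"
    for p :: "real \<times> real"
  have \<Phi>: "((\<lambda>(u, v). \<Phi> u v) has_derivative \<Phi>' p) (at p within UNIV \<times> {0..})"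
    if p_in: "p \<in> UNIV \<times> {0..}" for p
  proof -
    obtain u v where p: "p = (u, v)" "0 \<le> v" using p_in by auto
    show ?thesis
      using has_derivative_partialsI[OF \<Phi>_u \<Phi>_v] p \<Phi>_v_cont
      by (simp add: \<Phi>'_def continuous_on_eq_continuous_within)
  qed
  have "((\<lambda>s. (\<lambda>(u, v). \<Phi> u v) (s, s)) has_derivative (\<lambda>h. \<Phi>' (t, t) (h, h))) (at t within {0..})"
    by (rule has_derivative_in_compose2[where t="UNIV \<times> {0..}", OF \<Phi> _ _
          has_derivative_Pair[OF has_derivative_ident has_derivative_ident]])
      (use t in auto)
  then show ?thesis
    by (simp add: has_vector_derivative_def convolution_def[abs_def] \<Phi>_def \<Phi>\<^sub>u_def \<Phi>'_def
        scaleR_add_right add.commute)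
qed

lemma convolution_delay_kernel_2:
  fixes W :: "'a::banach \<Rightarrow>\<^sub>L 'a"
  assumes W: "L_iso W" and tau: "\<tau> > 0" and f: "continuous_on {0..} f"
  shows "convolution (delay_kernel \<tau> W 2) f t =
         Lpow W 2 (convolution (delay_kernel \<tau> W 0) f (t - 2 * \<tau>))"
proof -
  define r where "r = t - 2 * \<tau>"
  have "convolution (delay_kernel \<tau> W 2) f t =
      integral {0..t} (\<lambda>s. if s \<in> {..r} then Lpow W 2 (x2 \<tau> (r - s) W (f s)) else 0)"
    unfolding convolution_def
  proof (rule integral_cong)
    fix s
    have "x2 \<tau> (t - s - 2 * \<tau>) W = x2 \<tau> (r - s) W" by (simp add: r_def algebra_simps)
    then show "delay_kernel \<tau> W 2 (t - s) (f s) =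
        (if s \<in> {..r} then Lpow W 2 (x2 \<tau> (r - s) W (f s)) else 0)"
      by (simp add: delay_kernel_2_eq_x2[OF W tau] x2_neg)
  qed
  also have "\<dots> = integral {0..r} (\<lambda>s. Lpow W 2 (x2 \<tau> (r - s) W (f s)))"
  proof -
    have "{..r} \<inter> {0..t} = {0..r}" using tau by (auto simp: r_def)
    then show ?thesis by (simp only: Henstock_Kurzweil_Integration.integral_restrict_Int)
  qed
  also have "\<dots> = integral {0..r} (\<lambda>s. Lpow W 2 (delay_kernel \<tau> W 0 (r - s) (f s)))"
    by (rule integral_cong) (simp add: x2_eq_delay_kernel[OF W tau])
  also have "\<dots> = Lpow W 2 (convolution (delay_kernel \<tau> W 0) f r)"
    unfolding convolution_def
  proof (rule integral_blinfun_apply)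
    have "continuous_on {0..r} f" by (rule continuous_on_subset[OF f]) auto
    moreover have "continuous_on UNIV (delay_kernel \<tau> W 0)"
      by (rule continuous_delay_kernel[OF tau]) simp
    ultimately have "continuous_on {0..r} (\<lambda>s. delay_kernel \<tau> W 0 (r - s) (f s))"
      by (intro continuous_on_convolution_integrand)
    then show "(\<lambda>s. delay_kernel \<tau> W 0 (r - s) (f s)) integrable_on {0..r}"
      by (rule integrable_continuous_real)
  qed
  finally show ?thesis by (simp add: r_def)
qed

lemma classical_solutionE:
  assumes "classical_solution \<tau> W f x"
  obtains x' x'' where
    "\<And>t. - (2 * \<tau>) \<le> t \<Longrightarrow> (x has_vector_derivative x' t) (at t within {- (2 * \<tau>)..})"
    "\<And>t. 0 \<le> t \<Longrightarrow> (x' has_vector_derivative x'' t) (at t within {0..})"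
    "\<And>t. 0 \<le> t \<Longrightarrow> x'' t = f t + Lpow W 2 (x (t - 2 * \<tau>))"
    "\<And>t. t \<in> {- (2 * \<tau>)..0} \<Longrightarrow> x t = 0"
proof -
  obtain x' y'' x'' where
    "\<forall>t\<in>{-2*\<tau>..}. (x has_vector_derivative x' t) (at t within {-2*\<tau>..})"
    "\<forall>t\<in>{0..}. (x' has_vector_derivative x'' t) (at t within {0..})"
    "\<forall>t\<in>{0..}. x'' t - Lpow W 2 (x (t - 2*\<tau>)) = f t"
    "\<forall>t\<in>{-2*\<tau>..0}. x t = 0"
    using assms unfolding classical_solution_def by blast
  then show thesis
    by (intro that[of x' x'']) (auto simp: diff_eq_eq)
qed

lemma classical_solutionI:
  assumes "\<And>t. - (2 * \<tau>) \<le> t \<Longrightarrow> (x has_vector_derivative x' t) (at t within {- (2 * \<tau>)..})"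
    and "continuous_on {- (2 * \<tau>)..} x'"
    and "\<And>t. t \<in> {- (2 * \<tau>)..0} \<Longrightarrow> (x' has_vector_derivative y'' t) (at t within {- (2 * \<tau>)..0})"
    and "continuous_on {- (2 * \<tau>)..0} y''"
    and "\<And>t. 0 \<le> t \<Longrightarrow> (x' has_vector_derivative x'' t) (at t within {0..})"
    and "continuous_on {0..} x''"
    and "\<And>t. 0 \<le> t \<Longrightarrow> x'' t = f t + Lpow W 2 (x (t - 2 * \<tau>))"
    and "\<And>t. t \<in> {- (2 * \<tau>)..0} \<Longrightarrow> x t = 0"
  shows "classical_solution \<tau> W f x"
  unfolding classical_solution_def using assms
  by (intro exI[of _ x'] exI[of _ y''] exI[of _ x'']) auto

lemma classical_solution_convolution:
  fixes W :: "'a::banach \<Rightarrow>\<^sub>L 'a"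
  assumes W: "L_iso W" and tau: "\<tau> > 0" and f: "continuous_on {0..} f"
  shows "classical_solution \<tau> W f (convolution (delay_kernel \<tau> W 0) f)"
proof -
  let ?x = "convolution (delay_kernel \<tau> W 0) f" and ?x' = "convolution (delay_kernel \<tau> W 1) f"
  define x'' where "x'' t = f t + Lpow W 2 (?x (t - 2 * \<tau>))" for t
  have K1: "continuous_on UNIV (delay_kernel \<tau> W 1)" and K2: "continuous_on UNIV (delay_kernel \<tau> W 2)"
    by (simp_all add: continuous_delay_kernel[OF tau])
  have D0: "(delay_kernel \<tau> W 0 has_vector_derivative delay_kernel \<tau> W 1 u) (at u)" for u
    using has_vector_derivative_delay_kernel[OF tau, where i=0] by simp
  have D1: "(delay_kernel \<tau> W 1 has_vector_derivative delay_kernel \<tau> W 2 u) (at u)" for u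
    using has_vector_derivative_delay_kernel[OF tau, where i=1] by (simp add: numeral_2_eq_2)
  have x_deriv: "(?x has_vector_derivative ?x' t) (at t)" for t
  proof (rule has_vector_derivative_zero_extension)
    show "(?x has_vector_derivative ?x' s) (at s within {0..})" if "0 \<le> s" for s
      using has_vector_derivative_convolution[OF D0 K1 f that]
      by (simp add: delay_kernel_at_zero[OF tau])
  qed (simp_all add: convolution_nonpos)
  have x'_deriv: "(?x' has_vector_derivative x'' t) (at t within {0..})" if "0 \<le> t" for t
  proof -
    have "(?x' has_vector_derivative delay_kernel \<tau> W 1 0 (f t) + convolution (delay_kernel \<tau> W 2) f t)
        (at t within {0..})"
      by (rule has_vector_derivative_convolution[OF D1 K2 f that])
    then show ?thesis
      by (simp only: delay_kernel_at_zero[OF tau] convolution_delay_kernel_2[OF W tau f] x''_def blinfun_apply_id_blinfun)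
  qed
  have x'_cont: "continuous_on UNIV ?x'"
  proof (rule continuous_on_zero_extension)
    show "continuous_on {0..} ?x'"
      using x'_deriv by (intro continuous_on_vector_derivative) auto
  qed (simp add: convolution_nonpos)
  have x_cont: "continuous_on UNIV ?x"
    using x_deriv by (intro continuous_on_vector_derivative) auto
  have "continuous_on {0..} (\<lambda>t. ?x (t - 2 * \<tau>))"
    by (rule continuous_on_compose2[OF x_cont]) (auto intro!: continuous_intros)
  then have x''_cont: "continuous_on {0..} x''"
    unfolding x''_def by (intro continuous_intros f)
  show ?thesis
  proof (rule classical_solutionI)
    show "(?x has_vector_derivative ?x' t) (at t within {- (2 * \<tau>)..})" for t
      using x_deriv by (rule has_vector_derivative_at_within)
    show "continuous_on {- (2 * \<tau>)..} ?x'"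
      using x'_cont by (rule continuous_on_subset) simp
    show "(?x' has_vector_derivative 0) (at t within {- (2 * \<tau>)..0})" if "t \<in> {- (2 * \<tau>)..0}" for t
      by (rule has_vector_derivative_transform[where f="\<lambda>_. 0", OF that])
        (use that in \<open>auto simp: convolution_nonpos\<close>)
    show "(?x' has_vector_derivative x'' t) (at t within {0..})" if "0 \<le> t" for t
      using x'_deriv[OF that] .
    show "x'' t = f t + Lpow W 2 (?x (t - 2 * \<tau>))" for t
      by (simp add: x''_def)
    show "?x t = 0" if "t \<in> {- (2 * \<tau>)..0}" for t
      using that by (simp add: convolution_nonpos)
  qed (simp_all add: x''_cont)
qed

lemma delay_ode_vanishes:
  fixes d d' :: "real \<Rightarrow> 'a::real_normed_vector" and A :: "'a \<Rightarrow>\<^sub>L 'a"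
  assumes h: "h > 0"
    and d: "\<And>t. -h \<le> t \<Longrightarrow> (d has_vector_derivative d' t) (at t within {-h..})"
    and d': "\<And>t. 0 \<le> t \<Longrightarrow> (d' has_vector_derivative A (d (t - h))) (at t within {0..})"
    and history: "\<And>t. t \<in> {-h..0} \<Longrightarrow> d t = 0"
    and t: "-h \<le> t"
  shows "d t = 0"
proof -
  have d'_0: "d' 0 = 0"
  proof (rule vector_derivative_unique_within_closed_interval)
    show "(d has_vector_derivative d' 0) (at 0 within cbox (-h) 0)"
      using has_vector_derivative_within_subset[OF d[of 0]] h by auto
    show "(d has_vector_derivative 0) (at 0 within cbox (-h) 0)"
      by (rule has_vector_derivative_transform[where f="\<lambda>_. 0"]) (use history h in auto)
  qed (use h in auto)
  have "\<forall>s\<in>{-h..real n * h}. d s = 0" for n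
  proof (induction n)
    case 0
    then show ?case using history by simp
  next
    case (Suc n)
    define T where "T = real (Suc n) * h"
    have d'_vanishes: "d' s = 0" if "s \<in> {0..T}" for s
    proof (rule vanishing_if_derivative_vanishes[where g=d' and T=T, OF _ d'_0 that])
      fix s assume s: "s \<in> {0..T}"
      then have "d (s - h) = 0" using Suc by (auto simp: T_def algebra_simps)
      then show "(d' has_vector_derivative 0) (at s within {0..T})"
        using has_vector_derivative_within_subset[OF d'[of s]] s by auto
    qed
    have d_vanishes: "d s = 0" if "s \<in> {0..T}" for s
    proof (rule vanishing_if_derivative_vanishes[where g=d and T=T, OF _ _ that])
      fix s assume "s \<in> {0..T}"
      then show "(d has_vector_derivative 0) (at s within {0..T})"
        using has_vector_derivative_within_subset[OF d[of s]] d'_vanishes h by auto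
    qed (use history h in auto)
    show ?case
    proof
      fix s assume "s \<in> {-h..real (Suc n) * h}"
      then show "d s = 0"
        using history d_vanishes by (cases "s \<le> 0") (auto simp: T_def)
    qed
  qed
  moreover obtain n where "t / h \<le> real n" using real_arch_simple by blast
  then have "t \<le> real n * h" using h by (simp add: divide_le_eq)
  ultimately show ?thesis using t by auto
qed

lemma classical_solution_unique:
  assumes tau: "\<tau> > 0" and x: "classical_solution \<tau> W f x" and y: "classical_solution \<tau> W f y"
    and t: "- (2 * \<tau>) \<le> t"
  shows "x t = y t"
proof -
  obtain x' x'' where x': "\<And>t. - (2 * \<tau>) \<le> t \<Longrightarrow> (x has_vector_derivative x' t) (at t within {- (2 * \<tau>)..})"
    and x'': "\<And>t. 0 \<le> t \<Longrightarrow> (x' has_vector_derivative x'' t) (at t within {0..})"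
    and x_eq: "\<And>t. 0 \<le> t \<Longrightarrow> x'' t = f t + Lpow W 2 (x (t - 2 * \<tau>))"
    and x_hist: "\<And>t. t \<in> {- (2 * \<tau>)..0} \<Longrightarrow> x t = 0"
    using x by (rule classical_solutionE) blast
  obtain y' y'' where y': "\<And>t. - (2 * \<tau>) \<le> t \<Longrightarrow> (y has_vector_derivative y' t) (at t within {- (2 * \<tau>)..})"
    and y'': "\<And>t. 0 \<le> t \<Longrightarrow> (y' has_vector_derivative y'' t) (at t within {0..})"
    and y_eq: "\<And>t. 0 \<le> t \<Longrightarrow> y'' t = f t + Lpow W 2 (y (t - 2 * \<tau>))"
    and y_hist: "\<And>t. t \<in> {- (2 * \<tau>)..0} \<Longrightarrow> y t = 0"
    using y by (rule classical_solutionE) blast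
  have "(\<lambda>t. x t - y t) t = 0"
  proof (rule delay_ode_vanishes[where d'="\<lambda>t. x' t - y' t" and A="Lpow W 2" and h="2 * \<tau>"])
    show "((\<lambda>t. x' t - y' t) has_vector_derivative Lpow W 2 (x (t - 2 * \<tau>) - y (t - 2 * \<tau>)))
        (at t within {0..})" if "0 \<le> t" for t
      using has_vector_derivative_diff[OF x''[OF that] y''[OF that]]
      by (simp add: x_eq[OF that] y_eq[OF that] blinfun.diff_right)
    show "((\<lambda>t. x t - y t) has_vector_derivative x' t - y' t) (at t within {- (2 * \<tau>)..})"
      if "- (2 * \<tau>) \<le> t" for t
      using has_vector_derivative_diff[OF x'[OF that] y'[OF that]] .
    show "x t - y t = 0" if "t \<in> {- (2 * \<tau>)..0}" for t
      using x_hist[OF that] y_hist[OF that] by simp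
  qed (use tau t in auto)
  then show ?thesis by simp
qed

theorem mainTheorem6:
  fixes \<Omega> :: "'a::banach \<Rightarrow>\<^sub>L 'a" and \<tau> :: real and f :: "real \<Rightarrow> 'a"
  assumes "L_iso \<Omega>" and "\<tau> > 0" and "continuous_on {0..} f"
  defines "xs \<equiv> (\<lambda>t. if t < 0 then 0 else integral {0..t} (\<lambda>s. x2 \<tau> (t - s) \<Omega> (f s)))"
  shows "classical_solution \<tau> \<Omega> f xs \<and>
         (\<forall>x. classical_solution \<tau> \<Omega> f x \<longrightarrow> (\<forall>t\<in>{-2*\<tau>..}. x t = xs t))"
proof -
  have "xs = convolution (delay_kernel \<tau> \<Omega> 0) f"
  proof
    fix t
    show "xs t = convolution (delay_kernel \<tau> \<Omega> 0) f t"
      unfolding xs_def convolution_def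
      by (auto intro!: integral_cong simp: x2_eq_delay_kernel[OF assms(1,2)])
  qed
  then have sol: "classical_solution \<tau> \<Omega> f xs"
    using classical_solution_convolution[OF assms(1-3)] by simp
  show ?thesis
    using sol classical_solution_unique[OF assms(2) _ sol] by auto
qed

end
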